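(* Let $\lambda\in\mathcal O$ be a nonzero limit ordinal and $\mathcal A,\mathcal B:\mathcal O\to\mathrm{SAT}$. If $\mathcal A(\lambda)\subseteq\liminf_\lambda\mathcal A$ and $\limsup_\lambda\mathcal B\subseteq\mathcal B(\lambda)$, then $\limsup_{\alpha\to\lambda}(\mathcal A(\alpha)\Rightarrow\mathcal B(\alpha))\subseteq\mathcal A(\lambda)\Rightarrow\mathcal B(\lambda)$.
   Context: $\mathcal O$ is the set of ordinals $\le\top_{\mathsf{ord}}$ for a fixed ordinal $\top_{\mathsf{ord}}$ ($=\beth_\omega$). For $f:\mathcal O\to\mathfrak L$ into a complete lattice and a nonzero limit $\lambda$: $\liminf_{\lambda}f=\liminf_{\alpha\to\lambda}f(\alpha)=\sup_{\alpha_0<\lambda}\inf_{\alpha_0\le\alpha<\lambda}f(\alpha)$, $\limsup_\lambda f=\limsup_{\alpha\to\lambda}f(\alpha)=\inf_{\alpha_0<\lambda}\sup_{\alpha_0\le\alpha<\lambda}f(\alpha)$. Terms of an untyped lambda calculus with constants: $r,s,t::=c\mid x\mid\lambda x\,t\mid r\,s$. $\mathrm{SAT}$ denotes the set of saturated sets of terms (sets of strongly normalizing terms containing all neutral terms and closed under weak-head expansion); it is a complete lattice ordered by $\subseteq$ in which infima and suprema of nonempty families are intersection and union; $\liminf,\limsup$ are computed in it. For $\mathcal A,\mathcal B\in\mathrm{SAT}$, $\mathcal A\Rightarrow\mathcal B:=\{r\mid r\,s\in\mathcal B\text{ for all }s\in\mathcal A\}$. *)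

theory Defs
  imports Main
begin

text \<open>The ordinals \<open>\<le> \<top>\<^sub>o\<^sub>r\<^sub>d\<close> are modelled by an arbitrary well-ordered type \<open>'o\<close>.\<close>

definition nonzero_limit :: "'o::wellorder \<Rightarrow> bool" where
  "nonzero_limit l \<longleftrightarrow> (\<exists>a. a < l) \<and> (\<forall>a<l. \<exists>b. a < b \<and> b < l)"

definition liminf_at :: "'o::wellorder \<Rightarrow> ('o \<Rightarrow> 'a::complete_lattice) \<Rightarrow> 'a" where
  "liminf_at l f = (SUP a0\<in>{..<l}. INF a\<in>{a0..<l}. f a)"

definition limsup_at :: "'o::wellorder \<Rightarrow> ('o \<Rightarrow> 'a::complete_lattice) \<Rightarrow> 'a" where
  "limsup_at l f = (INF a0\<in>{..<l}. SUP a\<in>{a0..<l}. f a)"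

datatype 'c trm = Const 'c | Var nat | Lam "'c trm" | App "'c trm" "'c trm"

fun lift :: "nat \<Rightarrow> 'c trm \<Rightarrow> 'c trm" where
  "lift k (Const c) = Const c"
| "lift k (Var i) = (if i < k then Var i else Var (Suc i))"
| "lift k (Lam t) = Lam (lift (Suc k) t)"
| "lift k (App t u) = App (lift k t) (lift k u)"

fun subst :: "'c trm \<Rightarrow> nat \<Rightarrow> 'c trm \<Rightarrow> 'c trm" where
  "subst (Const c) k s = Const c"
| "subst (Var i) k s = (if i < k then Var i else if i = k then s else Var (i - 1))"
| "subst (Lam t) k s = Lam (subst t (Suc k) (lift 0 s))"
| "subst (App t u) k s = App (subst t k s) (subst u k s)"

inductive beta :: "'c trm \<Rightarrow> 'c trm \<Rightarrow> bool" where
  beta_redex: "beta (App (Lam t) s) (subst t 0 s)"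
| beta_appL: "beta t t' \<Longrightarrow> beta (App t u) (App t' u)"
| beta_appR: "beta u u' \<Longrightarrow> beta (App t u) (App t u')"
| beta_lam: "beta t t' \<Longrightarrow> beta (Lam t) (Lam t')"

definition SN :: "'c trm \<Rightarrow> bool" where
  "SN t \<longleftrightarrow> Wellfounded.accp (\<lambda>u v. beta v u) t"

inductive whr :: "'c trm \<Rightarrow> 'c trm \<Rightarrow> bool" where
  whr_redex: "whr (App (Lam t) s) (subst t 0 s)"
| whr_app: "whr t t' \<Longrightarrow> whr (App t u) (App t' u)"

inductive neutral :: "'c trm \<Rightarrow> bool" where
  neutral_var: "neutral (Var i)"
| neutral_app: "neutral t \<Longrightarrow> SN s \<Longrightarrow> neutral (App t s)"

definition SAT :: "'c trm set set" where
  "SAT = {A. A \<subseteq> {t. SN t} \<and> {t. neutral t} \<subseteq> A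
             \<and> (\<forall>t t'. whr t t' \<longrightarrow> t' \<in> A \<longrightarrow> SN t \<longrightarrow> t \<in> A)}"

definition arr :: "'c trm set \<Rightarrow> 'c trm set \<Rightarrow> 'c trm set" (infixr "\<Rrightarrow>" 60) where
  "A \<Rrightarrow> B = {r. \<forall>s\<in>A. App r s \<in> B}"

end

theory Submission
  imports Defs
begin

text \<open>The arrow is antitone in its first and monotone in its second argument, and
  \<open>limsup (A \<Rrightarrow> B) \<subseteq> liminf A \<Rrightarrow> limsup B\<close>: if \<open>s\<close> lies in \<open>A \<alpha>\<close> for all \<open>\<alpha>\<close> beyond
  some threshold and \<open>r\<close> lies in \<open>A \<alpha> \<Rrightarrow> B \<alpha>\<close> for cofinally many \<open>\<alpha>\<close>, then \<open>r s\<close> lies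
  in \<open>B \<alpha>\<close> for cofinally many \<open>\<alpha>\<close>.\<close>

lemma mem_liminf_at_iff:
  "x \<in> liminf_at l A \<longleftrightarrow> (\<exists>a0<l. \<forall>a. a0 \<le> a \<longrightarrow> a < l \<longrightarrow> x \<in> A a)"
  unfolding liminf_at_def by (simp only: UN_iff INT_iff Ball_def Bex_def lessThan_iff atLeastLessThan_iff) blast

lemma mem_limsup_at_iff:
  "x \<in> limsup_at l A \<longleftrightarrow> (\<forall>a0<l. \<exists>a. a0 \<le> a \<and> a < l \<and> x \<in> A a)"
  unfolding limsup_at_def by (simp only: UN_iff INT_iff Ball_def Bex_def lessThan_iff atLeastLessThan_iff) blast

lemma limsup_at_arr_subset:
  fixes l :: "'o::wellorder"
  shows "limsup_at l (\<lambda>a. A a \<Rrightarrow> B a) \<subseteq> liminf_at l A \<Rrightarrow> limsup_at l B"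
proof
  fix r assume r: "r \<in> limsup_at l (\<lambda>a. A a \<Rrightarrow> B a)"
  have "App r s \<in> limsup_at l B" if "s \<in> liminf_at l A" for s
  proof -
    from that obtain a0 where "a0 < l" and sA: "\<And>a. a0 \<le> a \<Longrightarrow> a < l \<Longrightarrow> s \<in> A a"
      by (auto simp: mem_liminf_at_iff)
    show ?thesis
      unfolding mem_limsup_at_iff
    proof (intro allI impI)
      fix b0 assume "b0 < l"
      with \<open>a0 < l\<close> have "max a0 b0 < l" by simp
      with r obtain a where a: "max a0 b0 \<le> a" "a < l" and "r \<in> A a \<Rrightarrow> B a"
        unfolding mem_limsup_at_iff by blast
      moreover have "s \<in> A a" using sA a by simp
      ultimately show "\<exists>a\<ge>b0. a < l \<and> App r s \<in> B a"
        by (auto simp: arr_def)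
    qed
  qed
  then show "r \<in> liminf_at l A \<Rrightarrow> limsup_at l B"
    by (simp add: arr_def)
qed

lemma arr_mono:
  assumes "A' \<subseteq> A" and "B \<subseteq> B'"
  shows "A \<Rrightarrow> B \<subseteq> A' \<Rrightarrow> B'"
  using assms unfolding arr_def by blast

theorem corollary4p8:
  fixes l :: "'o::wellorder"
    and A B :: "'o \<Rightarrow> 'c trm set"
  assumes "nonzero_limit l"
    and "\<And>a. A a \<in> SAT"
    and "\<And>a. B a \<in> SAT"
    and "A l \<subseteq> liminf_at l A"
    and "limsup_at l B \<subseteq> B l"
  shows "limsup_at l (\<lambda>a. A a \<Rrightarrow> B a) \<subseteq> A l \<Rrightarrow> B l"
  using limsup_at_arr_subset arr_mono[OF assms(4,5)] by (rule order_trans)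

end
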